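(* Let $n_1,n_2,n_3\ge 1$, $n=n_1+n_2+n_3$, and let $I_1=\{1,\dots,n_1\}$, $I_2=\{n_1+1,\dots,n_1+n_2\}$, $I_3=\{n_1+n_2+1,\dots,n\}$. Consider $G/H=\mathrm{SO}(n)/\mathrm{SO}(n_1)\cdot\mathrm{SO}(n_2)\cdot\mathrm{SO}(n_3)$ (block-diagonal embedding) with $\mathfrak m=\mathfrak m_{12}\oplus\mathfrak m_{13}\oplus\mathfrak m_{23}$, where $\mathfrak m_{ij}=\mathrm{span}\{\xi_{ab}: a\in I_i,\ b\in I_j\}$. Let $X=X_{\mathfrak m_{12}}+X_{\mathfrak m_{13}}+X_{\mathfrak m_{23}}\in\mathfrak m$ with $X_{\mathfrak m_{ij}}\in\mathfrak m_{ij}$. Then $X$ is an equigeodesic vector (with respect to the family of metrics $\Lambda=\lambda_{12}\mathrm{Id}_{\mathfrak m_{12}}+\lambda_{13}\mathrm{Id}_{\mathfrak m_{13}}+\lambda_{23}\mathrm{Id}_{\mathfrak m_{23}}$, $\lambda_{ij}>0$) if and only if $$[X_{\mathfrak m_{12}},X_{\mathfrak m_{13}}]_{\mathfrak m}=0,\quad [X_{\mathfrak m_{12}},X_{\mathfrak m_{23}}]_{\mathfrak m}=0,\quad [X_{\mathfrak m_{13}},X_{\mathfrak m_{23}}]_{\mathfrak m}=0.$$ Equivalently, writing $X=\sum a_{kl}\xi_{kl}$ (sum over pairs $k<l$ lying in different blocks) and forming the real matrices $A=(a_{ij})_{i\in I_1,j\in I_2}$, $C=(a_{ik})_{i\in I_1,k\in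 I_3}$, $D=(a_{jk})_{j\in I_2,k\in I_3}$, $X$ is equigeodesic if and only if $A^{t}C=0$, $AD=0$ and $CD^{t}=0$.
   Context: $E_{ab}$ denotes the $n\times n$ matrix with $1$ in entry $(a,b)$ and $0$ elsewhere, and $\xi_{ab}=E_{ab}-E_{ba}\in\mathfrak{so}(n)$. $\mathfrak m$ is the orthogonal complement of $\mathfrak h=\mathfrak{so}(n_1)\oplus\mathfrak{so}(n_2)\oplus\mathfrak{so}(n_3)$ in $\mathfrak{so}(n)$ with respect to $B(X,Y)=-\mathrm{tr}(XY)$, and $[\cdot,\cdot]_{\mathfrak m}$ denotes the $\mathfrak m$-component of the Lie bracket. Given a family of $B$-symmetric positive operators $\Lambda:\mathfrak m\to\mathfrak m$ (invariant metrics), a nonzero $X\in\mathfrak m$ is called an equigeodesic vector if $[X,\Lambda X]_{\mathfrak m}=0$ for every $\Lambda$ in the family (equivalently, $t\mapsto \exp(tX)\cdot eH$ is a geodesic for every such metric). *)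

theory Defs
  imports Complex_Main
begin

text \<open>n x n real matrices are represented as functions nat => nat => real, with
  indices ranging over {1..n}; entries outside {1..n} x {1..n} are required to be 0
  where membership in a subspace is concerned.\<close>

type_synonym rmat = "nat \<Rightarrow> nat \<Rightarrow> real"

definition mmul :: "nat \<Rightarrow> rmat \<Rightarrow> rmat \<Rightarrow> rmat" where
  "mmul n P Q = (\<lambda>i j. \<Sum>k\<in>{1..n}. P i k * Q k j)"

definition lie_br :: "nat \<Rightarrow> rmat \<Rightarrow> rmat \<Rightarrow> rmat" where
  "lie_br n P Q = (\<lambda>i j. mmul n P Q i j - mmul n Q P i j)"

definition blk :: "nat \<Rightarrow> nat \<Rightarrow> nat \<Rightarrow> nat" where
  "blk n1 n2 a = (if a \<le> n1 then 1 else if a \<le> n1 + n2 then 2 else (3::nat))"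

text \<open>Orthogonal projection onto m (w.r.t. B(X,Y) = -tr(XY)): keep the off-diagonal
  blocks, kill the block-diagonal part (which is h) .\<close>
definition proj_m :: "nat \<Rightarrow> nat \<Rightarrow> nat \<Rightarrow> rmat \<Rightarrow> rmat" where
  "proj_m n1 n2 n3 P = (\<lambda>a b.
     if a \<in> {1..n1+n2+n3} \<and> b \<in> {1..n1+n2+n3} \<and> blk n1 n2 a \<noteq> blk n1 n2 b then P a b else 0)"

definition skew_n :: "nat \<Rightarrow> rmat \<Rightarrow> bool" where
  "skew_n n P \<longleftrightarrow> (\<forall>a b. P a b = - P b a) \<and>
     (\<forall>a b. (a \<notin> {1..n} \<or> b \<notin> {1..n}) \<longrightarrow> P a b = 0)"

text \<open>m_ij = span of xi_ab (a in I_i, b in I_j): skew matrices supported on the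
  (I_i x I_j) and (I_j x I_i) blocks.\<close>
definition in_mij :: "nat \<Rightarrow> nat \<Rightarrow> nat \<Rightarrow> nat \<Rightarrow> nat \<Rightarrow> rmat \<Rightarrow> bool" where
  "in_mij n1 n2 n3 i j P \<longleftrightarrow> skew_n (n1+n2+n3) P \<and>
     (\<forall>a b. {blk n1 n2 a, blk n1 n2 b} \<noteq> {i, j} \<longrightarrow> P a b = 0)"

definition in_m :: "nat \<Rightarrow> nat \<Rightarrow> nat \<Rightarrow> rmat \<Rightarrow> bool" where
  "in_m n1 n2 n3 P \<longleftrightarrow> skew_n (n1+n2+n3) P \<and>
     (\<forall>a b. blk n1 n2 a = blk n1 n2 b \<longrightarrow> P a b = 0)"

definition comp_m :: "nat \<Rightarrow> nat \<Rightarrow> nat \<Rightarrow> nat \<Rightarrow> nat \<Rightarrow> rmat \<Rightarrow> rmat" where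
  "comp_m n1 n2 n3 i j P = (\<lambda>a b.
     if a \<in> {1..n1+n2+n3} \<and> b \<in> {1..n1+n2+n3} \<and> {blk n1 n2 a, blk n1 n2 b} = {i, j}
     then P a b else 0)"

definition Lam :: "nat \<Rightarrow> nat \<Rightarrow> nat \<Rightarrow> real \<Rightarrow> real \<Rightarrow> real \<Rightarrow> rmat \<Rightarrow> rmat" where
  "Lam n1 n2 n3 l12 l13 l23 P = (\<lambda>a b.
     l12 * comp_m n1 n2 n3 1 2 P a b + l13 * comp_m n1 n2 n3 1 3 P a b
     + l23 * comp_m n1 n2 n3 2 3 P a b)"

definition equigeodesic :: "nat \<Rightarrow> nat \<Rightarrow> nat \<Rightarrow> rmat \<Rightarrow> bool" where
  "equigeodesic n1 n2 n3 X \<longleftrightarrow> in_m n1 n2 n3 X \<and> X \<noteq> (\<lambda>a b. 0) \<and>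
     (\<forall>l12 l13 l23. l12 > 0 \<and> l13 > 0 \<and> l23 > 0 \<longrightarrow>
        proj_m n1 n2 n3 (lie_br (n1+n2+n3) X (Lam n1 n2 n3 l12 l13 l23 X)) = (\<lambda>a b. 0))"

end

theory Submission
  imports Defs
begin

text \<open>By bilinearity, \<open>[X, \<Lambda>X] = (\<lambda>13 - \<lambda>12)[X12, X13] + (\<lambda>23 - \<lambda>12)[X12, X23]
  + (\<lambda>23 - \<lambda>13)[X13, X23]\<close>. Since \<open>[m_ij, m_jk] \<subseteq> m_ik\<close> for distinct \<open>i, j, k\<close>, the
  three brackets lie in \<open>m_23\<close>, \<open>m_13\<close>, \<open>m_12\<close>: they are already in \<open>m\<close> and have
  disjoint supports, so the single metric \<open>\<lambda> = (1, 2, 3)\<close> forces all of them to vanish.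
  For \<open>P \<in> m_ij\<close> and \<open>Q \<in> m_jk\<close> the bracket is \<open>PQ - (PQ)\<^sup>t\<close>, where \<open>PQ\<close> is supported
  on the block \<open>I_i \<times> I_k\<close> and is there a product of blocks of \<open>X\<close>; this gives the
  conditions \<open>A\<^sup>tC = 0\<close>, \<open>AD = 0\<close> and \<open>CD\<^sup>t = 0\<close>.\<close>

definition block :: "nat \<Rightarrow> nat \<Rightarrow> nat \<Rightarrow> nat \<Rightarrow> nat set" where
  "block n1 n2 n3 i = {a \<in> {1..n1+n2+n3}. blk n1 n2 a = i}"

lemma block_subset: "block n1 n2 n3 i \<subseteq> {1..n1+n2+n3}"
  by (auto simp: block_def)

lemma block_1: "block n1 n2 n3 1 = {1..n1}"
  and block_2: "block n1 n2 n3 2 = {n1+1..n1+n2}"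
  and block_3: "block n1 n2 n3 3 = {n1+n2+1..n1+n2+n3}"
  by (auto simp: block_def blk_def)

lemma in_mij_commute: "in_mij n1 n2 n3 j i P = in_mij n1 n2 n3 i j P"
  by (simp add: in_mij_def insert_commute)

lemma in_mij_skew_n: "in_mij n1 n2 n3 i j P \<Longrightarrow> skew_n (n1+n2+n3) P"
  by (simp add: in_mij_def)

lemma in_mij_skew: "in_mij n1 n2 n3 i j P \<Longrightarrow> P a b = - P b a"
  unfolding in_mij_def skew_n_def by blast

lemma in_mij_vanish: "in_mij n1 n2 n3 i j P \<Longrightarrow> {blk n1 n2 a, blk n1 n2 b} \<noteq> {i, j} \<Longrightarrow> P a b = 0"
  by (simp add: in_mij_def)

lemma in_mij_nonzero_D:
  assumes "in_mij n1 n2 n3 i j P" and "P a b \<noteq> 0"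
  shows "a \<in> {1..n1+n2+n3}" "b \<in> {1..n1+n2+n3}" "{blk n1 n2 a, blk n1 n2 b} = {i, j}"
  using assms unfolding in_mij_def skew_n_def by blast+

lemma in_mij_vanish_outside:
  "in_mij n1 n2 n3 i j P \<Longrightarrow> a \<notin> {1..n1+n2+n3} \<or> b \<notin> {1..n1+n2+n3} \<Longrightarrow> P a b = 0"
  unfolding in_mij_def skew_n_def by blast

lemma comp_m_eqI:
  assumes "in_mij n1 n2 n3 i j P"
    and "\<And>a b. {blk n1 n2 a, blk n1 n2 b} = {i, j} \<Longrightarrow> X a b = P a b"
  shows "comp_m n1 n2 n3 i j X = P"
proof (intro ext)
  fix a b
  show "comp_m n1 n2 n3 i j X a b = P a b"
    using assms(2)[of a b] in_mij_vanish[OF assms(1), of a b]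
      in_mij_vanish_outside[OF assms(1), of a b]
    by (auto simp: comp_m_def)
qed

lemma proj_m_in_mij:
  assumes "i \<noteq> j" and "in_mij n1 n2 n3 i j P"
  shows "proj_m n1 n2 n3 P = P"
proof (intro ext)
  fix a b
  show "proj_m n1 n2 n3 P a b = P a b"
    using in_mij_nonzero_D[OF assms(2), of a b] assms(1)
    by (cases "P a b = 0") (auto simp: proj_m_def)
qed

lemma mmul_in_mij_term_nonzero_D:
  assumes P: "in_mij n1 n2 n3 i j P" and Q: "in_mij n1 n2 n3 j k Q"
    and distinct: "i \<noteq> j" "j \<noteq> k" "i \<noteq> k"
    and nz: "P a m * Q m b \<noteq> 0"
  shows "a \<in> block n1 n2 n3 i" "m \<in> block n1 n2 n3 j" "b \<in> block n1 n2 n3 k"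
proof -
  from nz have "P a m \<noteq> 0" "Q m b \<noteq> 0" by auto
  then have "{blk n1 n2 a, blk n1 n2 m} = {i, j}" "{blk n1 n2 m, blk n1 n2 b} = {j, k}"
    and "a \<in> {1..n1+n2+n3}" "m \<in> {1..n1+n2+n3}" "b \<in> {1..n1+n2+n3}"
    using in_mij_nonzero_D[OF P, of a m] in_mij_nonzero_D[OF Q, of m b] by auto
  with distinct show "a \<in> block n1 n2 n3 i" "m \<in> block n1 n2 n3 j" "b \<in> block n1 n2 n3 k"
    unfolding block_def by (auto simp: doubleton_eq_iff)
qed

lemma mmul_in_mij:
  assumes P: "in_mij n1 n2 n3 i j P" and Q: "in_mij n1 n2 n3 j k Q"
    and distinct: "i \<noteq> j" "j \<noteq> k" "i \<noteq> k"
  shows "mmul (n1+n2+n3) P Q a b =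
    (if a \<in> block n1 n2 n3 i \<and> b \<in> block n1 n2 n3 k
     then \<Sum>m\<in>block n1 n2 n3 j. P a m * Q m b else 0)"
proof (cases "a \<in> block n1 n2 n3 i \<and> b \<in> block n1 n2 n3 k")
  case True
  have "(\<Sum>m\<in>{1..n1+n2+n3}. P a m * Q m b) = (\<Sum>m\<in>block n1 n2 n3 j. P a m * Q m b)"
    using mmul_in_mij_term_nonzero_D(2)[OF P Q distinct, of a _ b]
    by (intro sum.mono_neutral_right) (auto simp: block_def)
  with True show ?thesis by (simp add: mmul_def)
next
  case False
  have "(\<Sum>m\<in>{1..n1+n2+n3}. P a m * Q m b) = 0"
    using mmul_in_mij_term_nonzero_D(1,3)[OF P Q distinct, of a _ b] False
    by (intro sum.neutral) blast
  with False show ?thesis by (simp only: mmul_def if_False)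
qed

lemma lie_br_skew:
  assumes "skew_n n P" and "skew_n n Q"
  shows "lie_br n P Q a b = mmul n P Q a b - mmul n P Q b a"
proof -
  have "Q a m * P m b = P b m * Q m a" for m
  proof -
    have "Q a m = - Q m a" "P m b = - P b m"
      using assms unfolding skew_n_def by blast+
    then show ?thesis by simp
  qed
  then have "mmul n Q P a b = mmul n P Q b a"
    unfolding mmul_def by simp
  then show ?thesis by (simp add: lie_br_def)
qed

lemma lie_br_in_mij:
  assumes P: "in_mij n1 n2 n3 i j P" and Q: "in_mij n1 n2 n3 j k Q"
    and distinct: "i \<noteq> j" "j \<noteq> k" "i \<noteq> k"
  shows "in_mij n1 n2 n3 i k (lie_br (n1+n2+n3) P Q)"
  unfolding in_mij_def skew_n_def
  using lie_br_skew[OF in_mij_skew_n[OF P] in_mij_skew_n[OF Q]]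
    mmul_in_mij[OF P Q distinct] block_subset distinct
  by (auto simp: block_def)

lemma lie_br_in_mij_eq_0_iff:
  assumes P: "in_mij n1 n2 n3 i j P" and Q: "in_mij n1 n2 n3 j k Q"
    and distinct: "i \<noteq> j" "j \<noteq> k" "i \<noteq> k"
  shows "lie_br (n1+n2+n3) P Q = (\<lambda>a b. 0) \<longleftrightarrow>
    (\<forall>a\<in>block n1 n2 n3 i. \<forall>b\<in>block n1 n2 n3 k. (\<Sum>m\<in>block n1 n2 n3 j. P a m * Q m b) = 0)"
  using lie_br_skew[OF in_mij_skew_n[OF P] in_mij_skew_n[OF Q]]
    mmul_in_mij[OF P Q distinct] distinct
  by (auto simp: fun_eq_iff block_def)

lemma in_mij_combination_eq_0:
  assumes P: "in_mij n1 n2 n3 2 3 P" and Q: "in_mij n1 n2 n3 1 3 Q" and R: "in_mij n1 n2 n3 1 2 R"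
    and coeffs: "c\<^sub>1 \<noteq> 0" "c\<^sub>2 \<noteq> 0" "c\<^sub>3 \<noteq> 0"
    and comb: "\<And>a b. c\<^sub>1 * P a b + c\<^sub>2 * Q a b + c\<^sub>3 * R a b = 0"
  shows "P = (\<lambda>a b. 0) \<and> Q = (\<lambda>a b. 0) \<and> R = (\<lambda>a b. 0)"
proof -
  have "P a b = 0 \<and> Q a b = 0 \<and> R a b = 0" for a b
    using in_mij_vanish[OF P, of a b] in_mij_vanish[OF Q, of a b] in_mij_vanish[OF R, of a b]
      comb[of a b] coeffs
    by (cases "{blk n1 n2 a, blk n1 n2 b} = {2, 3}"; cases "{blk n1 n2 a, blk n1 n2 b} = {1, 3}")
      (auto simp: doubleton_eq_iff)
  then show ?thesis by (simp add: fun_eq_iff)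
qed

locale three_block_decomposition =
  fixes n1 n2 n3 :: nat and X12 X13 X23 X :: rmat
  assumes X12: "in_mij n1 n2 n3 1 2 X12"
    and X13: "in_mij n1 n2 n3 1 3 X13"
    and X23: "in_mij n1 n2 n3 2 3 X23"
    and X_sum: "X = (\<lambda>a b. X12 a b + X13 a b + X23 a b)"
begin

lemma X_eq_X12: "{blk n1 n2 a, blk n1 n2 b} = {1, 2} \<Longrightarrow> X a b = X12 a b"
  and X_eq_X13: "{blk n1 n2 a, blk n1 n2 b} = {1, 3} \<Longrightarrow> X a b = X13 a b"
  and X_eq_X23: "{blk n1 n2 a, blk n1 n2 b} = {2, 3} \<Longrightarrow> X a b = X23 a b"
  using in_mij_vanish[OF X12, of a b] in_mij_vanish[OF X13, of a b] in_mij_vanish[OF X23, of a b]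
  by (auto simp: X_sum doubleton_eq_iff)

lemma X_in_m: "in_m n1 n2 n3 X"
  unfolding in_m_def skew_n_def
proof (intro conjI allI impI)
  fix a b
  show "X a b = - X b a"
    using in_mij_skew[OF X12, of a b] in_mij_skew[OF X13, of a b] in_mij_skew[OF X23, of a b]
    by (simp add: X_sum)
  show "X a b = 0" if "a \<notin> {1..n1+n2+n3} \<or> b \<notin> {1..n1+n2+n3}"
    using in_mij_vanish_outside[OF X12 that] in_mij_vanish_outside[OF X13 that]
      in_mij_vanish_outside[OF X23 that]
    by (simp add: X_sum)
  show "X a b = 0" if "blk n1 n2 a = blk n1 n2 b"
    using that in_mij_vanish[OF X12, of a b] in_mij_vanish[OF X13, of a b]
      in_mij_vanish[OF X23, of a b]
    by (auto simp: X_sum)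
qed

lemma comp_m_X:
  "comp_m n1 n2 n3 1 2 X = X12" "comp_m n1 n2 n3 1 3 X = X13" "comp_m n1 n2 n3 2 3 X = X23"
  using comp_m_eqI[OF X12 X_eq_X12] comp_m_eqI[OF X13 X_eq_X13] comp_m_eqI[OF X23 X_eq_X23]
  by blast+

lemma X12_swap: "in_mij n1 n2 n3 2 1 X12"
  and X23_swap: "in_mij n1 n2 n3 3 2 X23"
  using X12 X23 by (simp_all only: in_mij_commute[of n1 n2 n3 1 2] in_mij_commute[of n1 n2 n3 2 3])

lemma brackets_in_mij:
  "in_mij n1 n2 n3 2 3 (lie_br (n1+n2+n3) X12 X13)"
  "in_mij n1 n2 n3 1 3 (lie_br (n1+n2+n3) X12 X23)"
  "in_mij n1 n2 n3 1 2 (lie_br (n1+n2+n3) X13 X23)"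
  by (rule lie_br_in_mij[OF X12_swap X13] lie_br_in_mij[OF X12 X23]
      lie_br_in_mij[OF X13 X23_swap]; simp)+

lemma lie_br_Lam:
  "lie_br (n1+n2+n3) X (Lam n1 n2 n3 l12 l13 l23 X) a b =
     (l13 - l12) * lie_br (n1+n2+n3) X12 X13 a b + (l23 - l12) * lie_br (n1+n2+n3) X12 X23 a b
     + (l23 - l13) * lie_br (n1+n2+n3) X13 X23 a b"
proof -
  let ?S = "{1..n1+n2+n3}"
  have "lie_br (n1+n2+n3) X (Lam n1 n2 n3 l12 l13 l23 X) a b =
     (\<Sum>m\<in>?S. X a m * (l12 * X12 m b + l13 * X13 m b + l23 * X23 m b)
        - (l12 * X12 a m + l13 * X13 a m + l23 * X23 a m) * X m b)"
    unfolding lie_br_def mmul_def Lam_def comp_m_X by (simp add: sum_subtractf)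
  also have "\<dots> = (\<Sum>m\<in>?S. (l13 - l12) * (X12 a m * X13 m b - X13 a m * X12 m b)
      + (l23 - l12) * (X12 a m * X23 m b - X23 a m * X12 m b)
      + (l23 - l13) * (X13 a m * X23 m b - X23 a m * X13 m b))"
    by (rule sum.cong) (simp_all add: X_sum algebra_simps)
  also have "\<dots> = (l13 - l12) * lie_br (n1+n2+n3) X12 X13 a b
      + (l23 - l12) * lie_br (n1+n2+n3) X12 X23 a b + (l23 - l13) * lie_br (n1+n2+n3) X13 X23 a b"
    unfolding lie_br_def mmul_def
    by (simp add: sum.distrib sum_distrib_left sum_subtractf right_diff_distrib)
  finally show ?thesis .
qed

lemma proj_m_lie_br_Lam:
  "proj_m n1 n2 n3 (lie_br (n1+n2+n3) X (Lam n1 n2 n3 l12 l13 l23 X)) =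
     (\<lambda>a b. (l13 - l12) * lie_br (n1+n2+n3) X12 X13 a b
       + (l23 - l12) * lie_br (n1+n2+n3) X12 X23 a b + (l23 - l13) * lie_br (n1+n2+n3) X13 X23 a b)"
proof (intro ext)
  fix a b
  have "proj_m n1 n2 n3 (lie_br (n1+n2+n3) X12 X13) a b = lie_br (n1+n2+n3) X12 X13 a b"
    "proj_m n1 n2 n3 (lie_br (n1+n2+n3) X12 X23) a b = lie_br (n1+n2+n3) X12 X23 a b"
    "proj_m n1 n2 n3 (lie_br (n1+n2+n3) X13 X23) a b = lie_br (n1+n2+n3) X13 X23 a b"
    using proj_m_in_mij[OF _ brackets_in_mij(1)] proj_m_in_mij[OF _ brackets_in_mij(2)]
      proj_m_in_mij[OF _ brackets_in_mij(3)]
    by simp_all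
  then show "proj_m n1 n2 n3 (lie_br (n1+n2+n3) X (Lam n1 n2 n3 l12 l13 l23 X)) a b =
     (l13 - l12) * lie_br (n1+n2+n3) X12 X13 a b
       + (l23 - l12) * lie_br (n1+n2+n3) X12 X23 a b + (l23 - l13) * lie_br (n1+n2+n3) X13 X23 a b"
    by (auto simp: proj_m_def lie_br_Lam split: if_splits)
qed

lemma equigeodesic_iff_brackets_vanish:
  "equigeodesic n1 n2 n3 X \<longleftrightarrow> X \<noteq> (\<lambda>a b. 0) \<and>
     lie_br (n1+n2+n3) X12 X13 = (\<lambda>a b. 0) \<and> lie_br (n1+n2+n3) X12 X23 = (\<lambda>a b. 0) \<and>
     lie_br (n1+n2+n3) X13 X23 = (\<lambda>a b. 0)"
proof
  assume eq: "equigeodesic n1 n2 n3 X"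
  then have "proj_m n1 n2 n3 (lie_br (n1+n2+n3) X (Lam n1 n2 n3 1 2 3 X)) = (\<lambda>a b. 0)"
    unfolding equigeodesic_def by simp
  then have "1 * lie_br (n1+n2+n3) X12 X13 a b + 2 * lie_br (n1+n2+n3) X12 X23 a b
      + 1 * lie_br (n1+n2+n3) X13 X23 a b = 0" for a b
    unfolding proj_m_lie_br_Lam by (simp add: fun_eq_iff)
  with in_mij_combination_eq_0[OF brackets_in_mij, of 1 2 1] eq
  show "X \<noteq> (\<lambda>a b. 0) \<and>
     lie_br (n1+n2+n3) X12 X13 = (\<lambda>a b. 0) \<and> lie_br (n1+n2+n3) X12 X23 = (\<lambda>a b. 0) \<and>
     lie_br (n1+n2+n3) X13 X23 = (\<lambda>a b. 0)"
    unfolding equigeodesic_def by simp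
next
  assume "X \<noteq> (\<lambda>a b. 0) \<and>
     lie_br (n1+n2+n3) X12 X13 = (\<lambda>a b. 0) \<and> lie_br (n1+n2+n3) X12 X23 = (\<lambda>a b. 0) \<and>
     lie_br (n1+n2+n3) X13 X23 = (\<lambda>a b. 0)"
  then show "equigeodesic n1 n2 n3 X"
    unfolding equigeodesic_def proj_m_lie_br_Lam using X_in_m by simp
qed

lemma lie_br_X12_X13_eq_0_iff:
  "lie_br (n1+n2+n3) X12 X13 = (\<lambda>a b. 0) \<longleftrightarrow>
     (\<forall>j\<in>block n1 n2 n3 2. \<forall>k\<in>block n1 n2 n3 3. (\<Sum>i\<in>block n1 n2 n3 1. X i j * X i k) = 0)"
proof -
  have "(\<Sum>m\<in>block n1 n2 n3 1. X12 a m * X13 m b) = - (\<Sum>i\<in>block n1 n2 n3 1. X i a * X i b)"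
    if "a \<in> block n1 n2 n3 2" "b \<in> block n1 n2 n3 3" for a b
    unfolding sum_negf[symmetric]
    using that X_eq_X12 X_eq_X13 in_mij_skew[OF X12, of a]
    by (intro sum.cong) (simp_all add: block_def insert_commute)
  then show ?thesis
    using lie_br_in_mij_eq_0_iff[OF X12_swap X13] by simp
qed

lemma lie_br_X12_X23_eq_0_iff:
  "lie_br (n1+n2+n3) X12 X23 = (\<lambda>a b. 0) \<longleftrightarrow>
     (\<forall>i\<in>block n1 n2 n3 1. \<forall>k\<in>block n1 n2 n3 3. (\<Sum>j\<in>block n1 n2 n3 2. X i j * X j k) = 0)"
proof -
  have "(\<Sum>m\<in>block n1 n2 n3 2. X12 a m * X23 m b) = (\<Sum>j\<in>block n1 n2 n3 2. X a j * X j b)"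
    if "a \<in> block n1 n2 n3 1" "b \<in> block n1 n2 n3 3" for a b
    using that X_eq_X12 X_eq_X23
    by (intro sum.cong) (simp_all add: block_def)
  then show ?thesis
    using lie_br_in_mij_eq_0_iff[OF X12 X23] by simp
qed

lemma lie_br_X13_X23_eq_0_iff:
  "lie_br (n1+n2+n3) X13 X23 = (\<lambda>a b. 0) \<longleftrightarrow>
     (\<forall>i\<in>block n1 n2 n3 1. \<forall>j\<in>block n1 n2 n3 2. (\<Sum>k\<in>block n1 n2 n3 3. X i k * X j k) = 0)"
proof -
  have "(\<Sum>m\<in>block n1 n2 n3 3. X13 a m * X23 m b) = - (\<Sum>k\<in>block n1 n2 n3 3. X a k * X b k)"
    if "a \<in> block n1 n2 n3 1" "b \<in> block n1 n2 n3 2" for a b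
    unfolding sum_negf[symmetric]
    using that X_eq_X13 X_eq_X23 in_mij_skew[OF X23, of _ b]
    by (intro sum.cong) (simp_all add: block_def insert_commute)
  then show ?thesis
    using lie_br_in_mij_eq_0_iff[OF X13 X23_swap] by simp
qed

end

theorem proposition4p1:
  fixes n1 n2 n3 :: nat and X X12 X13 X23 :: rmat
  assumes "n1 \<ge> 1" "n2 \<ge> 1" "n3 \<ge> 1"
    and "in_mij n1 n2 n3 1 2 X12" "in_mij n1 n2 n3 1 3 X13" "in_mij n1 n2 n3 2 3 X23"
    and "X = (\<lambda>a b. X12 a b + X13 a b + X23 a b)"
    and "X \<noteq> (\<lambda>a b. 0)"
  shows "(equigeodesic n1 n2 n3 X \<longleftrightarrow>
            proj_m n1 n2 n3 (lie_br (n1+n2+n3) X12 X13) = (\<lambda>a b. 0) \<and>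
            proj_m n1 n2 n3 (lie_br (n1+n2+n3) X12 X23) = (\<lambda>a b. 0) \<and>
            proj_m n1 n2 n3 (lie_br (n1+n2+n3) X13 X23) = (\<lambda>a b. 0))
       \<and> (equigeodesic n1 n2 n3 X \<longleftrightarrow>
            (\<forall>j\<in>{n1+1..n1+n2}. \<forall>k\<in>{n1+n2+1..n1+n2+n3}.
               (\<Sum>i\<in>{1..n1}. X i j * X i k) = 0) \<and>
            (\<forall>i\<in>{1..n1}. \<forall>k\<in>{n1+n2+1..n1+n2+n3}.
               (\<Sum>j\<in>{n1+1..n1+n2}. X i j * X j k) = 0) \<and>
            (\<forall>i\<in>{1..n1}. \<forall>j\<in>{n1+1..n1+n2}.
               (\<Sum>k\<in>{n1+n2+1..n1+n2+n3}. X i k * X j k) = 0))"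
proof -
  interpret three_block_decomposition n1 n2 n3 X12 X13 X23 X
    using assms(4-7) by unfold_locales
  have "proj_m n1 n2 n3 (lie_br (n1+n2+n3) X12 X13) = lie_br (n1+n2+n3) X12 X13"
    "proj_m n1 n2 n3 (lie_br (n1+n2+n3) X12 X23) = lie_br (n1+n2+n3) X12 X23"
    "proj_m n1 n2 n3 (lie_br (n1+n2+n3) X13 X23) = lie_br (n1+n2+n3) X13 X23"
    by (rule proj_m_in_mij[OF _ brackets_in_mij(1)] proj_m_in_mij[OF _ brackets_in_mij(2)]
        proj_m_in_mij[OF _ brackets_in_mij(3)]; simp)+
  then show ?thesis
    using equigeodesic_iff_brackets_vanish assms(8) lie_br_X12_X13_eq_0_iff
      lie_br_X12_X23_eq_0_iff lie_br_X13_X23_eq_0_iff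
    unfolding block_1 block_2 block_3 by simp
qed

end
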